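(* Let $m\ge d\ge1$, $\lambda=d/m$, and let $\mathcal L=\sum_ic_i(\partial_x\partial_y)^i$ be a linear differential operator with constant coefficients $c_i$. For bivariate polynomials $p(x,y)=y^{m-d}f(xy)$ and $q(x,y)=y^{m-d}g(xy)$ with $f,g$ of degree at most $d$, \[ \mathcal L\{p\boxplus_{d,\lambda}q\}=\mathcal L\{p\}\boxplus_{d,\lambda}q=p\boxplus_{d,\lambda}\mathcal L\{q\}. \]
   Context: For $f=\sum_{i=0}^d(-1)^ia_ix^{d-i}$, $g=\sum_{i=0}^d(-1)^ib_ix^{d-i}$ (degree at most $d$): $(f\boxplus_{d,\lambda}g)(x)=\sum_{k=0}^dx^{d-k}(-1)^k\sum_{i+j=k}\frac{(d-i)!(d-j)!}{d!(d-k)!}\frac{(m-i)!(m-j)!}{m!(m-k)!}a_ib_j$, and for $p=y^{m-d}f(xy)$, $q=y^{m-d}g(xy)$, $p\boxplus_{d,\lambda}q:=y^{m-d}(f\boxplus_{d,\lambda}g)(xy)$. Note $(\partial_x\partial_y)$ maps the space $\{y^{m-d}h(xy):\deg h\le d\}$ into itself. *)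

theory Defs
  imports "HOL-Analysis.Analysis" "HOL-Computational_Algebra.Polynomial"
begin

text \<open>Coefficients in the convention f = sum_i (-1)^i a_i x^(d-i).\<close>
definition acoef :: "nat \<Rightarrow> real poly \<Rightarrow> nat \<Rightarrow> real" where
  "acoef d f i = (-1)^i * coeff f (d - i)"

definition bpweight :: "nat \<Rightarrow> nat \<Rightarrow> nat \<Rightarrow> nat \<Rightarrow> nat \<Rightarrow> real" where
  "bpweight d m i j k =
     (fact (d - i) * fact (d - j)) / (fact d * fact (d - k)) *
     ((fact (m - i) * fact (m - j)) / (fact m * fact (m - k)))"

text \<open>Univariate finite free convolution f boxplus_{d,lambda} g with lambda = d/m.\<close>
definition boxplus :: "nat \<Rightarrow> nat \<Rightarrow> real poly \<Rightarrow> real poly \<Rightarrow> real poly" where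
  "boxplus d m f g =
     (\<Sum>k\<le>d. monom ((-1)^k * (\<Sum>i\<le>k. bpweight d m i (k - i) k
                                   * acoef d f i * acoef d g (k - i))) (d - k))"

definition biv :: "nat \<Rightarrow> nat \<Rightarrow> real poly \<Rightarrow> real \<Rightarrow> real \<Rightarrow> real" where
  "biv d m h = (\<lambda>x y. y ^ (m - d) * poly h (x * y))"

definition dxdy :: "(real \<Rightarrow> real \<Rightarrow> real) \<Rightarrow> real \<Rightarrow> real \<Rightarrow> real" where
  "dxdy P = (\<lambda>x y. deriv (\<lambda>s. deriv (\<lambda>t. P s t) y) x)"

definition Lop :: "(nat \<Rightarrow> real) \<Rightarrow> nat \<Rightarrow> (real \<Rightarrow> real \<Rightarrow> real) \<Rightarrow> real \<Rightarrow> real \<Rightarrow> real" where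
  "Lop c N P = (\<lambda>x y. \<Sum>i\<le>N. c i * (dxdy ^^ i) P x y)"

end

theory Submission
  imports Defs
begin

text \<open>On polynomials of the form \<open>y^n h(xy)\<close> the operator \<open>\<partial>\<^sub>x\<partial>\<^sub>y\<close> acts as the univariate
  operator \<open>h \<mapsto> (n+1) h' + z h''\<close> with \<open>n = m - d\<close>. In the coefficients \<open>a\<^sub>k\<close> of the convention
  \<open>h = \<Sum> (-1)^k a\<^sub>k z^(d-k)\<close> it becomes the shift \<open>a\<^sub>k\<^sub>+\<^sub>1 \<mapsto> -(d-k)(m-k) a\<^sub>k\<close>, \<open>a\<^sub>0 \<mapsto> 0\<close>.
  The weights of \<open>\<boxplus>\<^sub>d\<^sub>,\<^sub>\<lambda>\<close> satisfy \<open>w(i+1,j,k+1) (d-i)(m-i) = w(i,j,k) (d-k)(m-k)\<close>, which is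
  exactly what is needed for this shift applied to the first argument to commute with the
  convolution. Linearity extends this to \<open>\<L>\<close>, and symmetry of \<open>\<boxplus>\<^sub>d\<^sub>,\<^sub>\<lambda>\<close> gives the second argument.\<close>

definition dxdy_poly :: "nat \<Rightarrow> real poly \<Rightarrow> real poly" where
  "dxdy_poly n h = smult (of_nat n + 1) (pderiv h) + pCons 0 (pderiv (pderiv h))"

lemma poly_dxdy_poly:
  "poly (dxdy_poly n h) z = (of_nat n + 1) * poly (pderiv h) z + z * poly (pderiv (pderiv h)) z"
  by (simp add: dxdy_poly_def)

lemma coeff_dxdy_poly:
  "coeff (dxdy_poly n h) j = of_nat (Suc j) * (of_nat n + 1 + of_nat j) * coeff h (Suc j)"
  by (cases j) (auto simp: dxdy_poly_def coeff_pderiv algebra_simps)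

lemma degree_dxdy_poly_le: "degree (dxdy_poly n h) \<le> degree h"
  by (rule degree_le) (auto simp: coeff_dxdy_poly coeff_eq_0)

lemma degree_funpow_dxdy_poly_le: "degree ((dxdy_poly n ^^ i) h) \<le> degree h"
  by (induction i) (auto intro: order.trans[OF degree_dxdy_poly_le])

lemma has_field_derivative_power_mult_poly_y:
  "((\<lambda>t. t ^ n * poly h (s * t)) has_field_derivative
     of_nat n * y ^ (n - 1) * poly h (s * y) + s * y ^ n * poly (pderiv h) (s * y)) (at y)"
  by (auto intro!: derivative_eq_intros DERIV_chain2[OF poly_DERIV] simp: algebra_simps)

lemma has_field_derivative_power_mult_poly_xy:
  "((\<lambda>s. of_nat n * y ^ (n - 1) * poly h (s * y) + s * y ^ n * poly (pderiv h) (s * y))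
     has_field_derivative y ^ n * poly (dxdy_poly n h) (x * y)) (at x)"
proof -
  have "of_nat n * y ^ (n - 1) * y = of_nat n * y ^ n"
    by (cases n) simp_all
  then show ?thesis
    by (auto intro!: derivative_eq_intros DERIV_chain2[OF poly_DERIV]
        simp: poly_dxdy_poly algebra_simps)
qed

lemma dxdy_power_mult_poly:
  "dxdy (\<lambda>x y. y ^ n * poly h (x * y)) = (\<lambda>x y. y ^ n * poly (dxdy_poly n h) (x * y))"
proof (intro ext)
  fix x y :: real
  have inner: "(\<lambda>s. deriv (\<lambda>t. t ^ n * poly h (s * t)) y)
      = (\<lambda>s. of_nat n * y ^ (n - 1) * poly h (s * y) + s * y ^ n * poly (pderiv h) (s * y))"
    by (simp add: DERIV_imp_deriv[OF has_field_derivative_power_mult_poly_y])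
  show "dxdy (\<lambda>x y. y ^ n * poly h (x * y)) x y = y ^ n * poly (dxdy_poly n h) (x * y)"
    unfolding dxdy_def inner by (rule DERIV_imp_deriv[OF has_field_derivative_power_mult_poly_xy])
qed

lemma dxdy_biv: "dxdy (biv d m h) = biv d m (dxdy_poly (m - d) h)"
  unfolding biv_def by (rule dxdy_power_mult_poly)

lemma funpow_dxdy_biv: "(dxdy ^^ i) (biv d m h) = biv d m ((dxdy_poly (m - d) ^^ i) h)"
  by (induction i) (simp_all add: dxdy_biv)

definition Lop_poly :: "(nat \<Rightarrow> real) \<Rightarrow> nat \<Rightarrow> nat \<Rightarrow> real poly \<Rightarrow> real poly" where
  "Lop_poly c N n h = (\<Sum>i\<le>N. smult (c i) ((dxdy_poly n ^^ i) h))"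

lemma Lop_biv: "Lop c N (biv d m h) = biv d m (Lop_poly c N (m - d) h)"
  unfolding Lop_def Lop_poly_def funpow_dxdy_biv
  by (simp add: biv_def poly_sum sum_distrib_left mult_ac)

lemma degree_Lop_poly_le: "degree (Lop_poly c N n h) \<le> degree h"
  unfolding Lop_poly_def
  by (intro degree_sum_le)
     (auto intro: order.trans[OF degree_smult_le] degree_funpow_dxdy_poly_le)

definition boxplus_coef :: "nat \<Rightarrow> nat \<Rightarrow> real poly \<Rightarrow> real poly \<Rightarrow> nat \<Rightarrow> real" where
  "boxplus_coef d m f g k = (\<Sum>i\<le>k. bpweight d m i (k - i) k * acoef d f i * acoef d g (k - i))"

lemma coeff_boxplus:
  "coeff (boxplus d m f g) e = (if e \<le> d then (-1) ^ (d - e) * boxplus_coef d m f g (d - e) else 0)"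
proof -
  have "coeff (boxplus d m f g) e
      = (\<Sum>k\<le>d. if k = d - e \<and> e \<le> d then (-1) ^ k * boxplus_coef d m f g k else 0)"
    unfolding boxplus_def coeff_sum coeff_monom boxplus_coef_def
    by (intro sum.cong refl) auto
  then show ?thesis
    by (cases "e \<le> d") (auto simp: sum.delta)
qed

lemma degree_boxplus_le: "degree (boxplus d m f g) \<le> d"
  by (rule degree_le) (simp add: coeff_boxplus)

lemma acoef_boxplus: "k \<le> d \<Longrightarrow> acoef d (boxplus d m f g) k = boxplus_coef d m f g k"
  by (simp add: acoef_def coeff_boxplus flip: power_add mult.assoc)

lemma poly_eq_by_acoef:
  assumes "degree p \<le> d" "degree q \<le> d" "\<And>k. k \<le> d \<Longrightarrow> acoef d p k = acoef d q k"
  shows "p = q"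
proof (rule poly_eqI)
  fix e
  show "coeff p e = coeff q e"
  proof (cases "e \<le> d")
    case True
    then show ?thesis using assms(3)[of "d - e"] by (simp add: acoef_def)
  next
    case False
    then show ?thesis using assms(1,2) by (simp add: coeff_eq_0)
  qed
qed

lemma boxplus_coef_commute: "boxplus_coef d m f g k = boxplus_coef d m g f k"
  unfolding boxplus_coef_def bpweight_def
  by (rule sum.reindex_bij_witness[where i="\<lambda>i. k - i" and j="\<lambda>i. k - i"]) (auto simp: mult_ac)

lemma boxplus_commute: "boxplus d m f g = boxplus d m g f"
  by (rule poly_eqI) (simp add: coeff_boxplus boxplus_coef_commute)

lemma boxplus_sum_smult_left:
  assumes "finite A"
  shows "boxplus d m (\<Sum>j\<in>A. smult (c j) (F j)) g = (\<Sum>j\<in>A. smult (c j) (boxplus d m (F j) g))"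
proof (rule poly_eqI)
  fix e
  have acoef_sum: "acoef d (\<Sum>j\<in>A. smult (c j) (F j)) i = (\<Sum>j\<in>A. c j * acoef d (F j) i)" for i
    by (simp add: acoef_def coeff_sum sum_distrib_left mult_ac)
  show "coeff (boxplus d m (\<Sum>j\<in>A. smult (c j) (F j)) g) e
      = coeff (\<Sum>j\<in>A. smult (c j) (boxplus d m (F j) g)) e"
    unfolding coeff_boxplus coeff_sum coeff_smult boxplus_coef_def acoef_sum
    by (auto simp: sum_distrib_left sum_distrib_right mult_ac intro: sum.swap)
qed

lemma bpweight_Suc_shift:
  assumes "i \<le> k" "k < d" "d \<le> m"
  shows "bpweight d m (Suc i) (k - i) (Suc k) * (real (d - i) * real (m - i))
       = bpweight d m i (k - i) k * (real (d - k) * real (m - k))"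
proof -
  have Suc_diff: "d - i = Suc (d - Suc i)" "d - k = Suc (d - Suc k)"
    "m - i = Suc (m - Suc i)" "m - k = Suc (m - Suc k)"
    using assms by auto
  have "fact (d - Suc k) > (0::real)" "fact (m - Suc k) > (0::real)"
    "fact d > (0::real)" "fact m > (0::real)"
    by auto
  then show ?thesis
    unfolding bpweight_def Suc_diff by (simp add: fact_Suc field_simps del: of_nat_Suc)
qed

lemma acoef_dxdy_poly_0: "degree h \<le> d \<Longrightarrow> acoef d (dxdy_poly n h) 0 = 0"
  by (simp add: acoef_def coeff_dxdy_poly coeff_eq_0)

lemma acoef_dxdy_poly_Suc:
  assumes "k < d" "d \<le> m"
  shows "acoef d (dxdy_poly (m - d) h) (Suc k) = - (real (d - k) * real (m - k)) * acoef d h k"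
proof -
  have "Suc (d - Suc k) = d - k" "real (m - d) + 1 + real (d - Suc k) = real (m - k)"
    using assms by (auto simp: of_nat_diff)
  then show ?thesis
    by (simp add: acoef_def coeff_dxdy_poly)
qed

lemma boxplus_coef_dxdy_poly_Suc:
  assumes "k < d" "d \<le> m" "degree f \<le> d"
  shows "boxplus_coef d m (dxdy_poly (m - d) f) g (Suc k)
       = - (real (d - k) * real (m - k)) * boxplus_coef d m f g k"
proof -
  have "boxplus_coef d m (dxdy_poly (m - d) f) g (Suc k)
      = (\<Sum>i\<le>k. bpweight d m (Suc i) (k - i) (Suc k)
                 * acoef d (dxdy_poly (m - d) f) (Suc i) * acoef d g (k - i))"
    unfolding boxplus_coef_def sum.atMost_Suc_shift using assms(3) by (simp add: acoef_dxdy_poly_0)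
  also have "\<dots> = (\<Sum>i\<le>k. - (real (d - k) * real (m - k))
                 * (bpweight d m i (k - i) k * acoef d f i * acoef d g (k - i)))"
  proof (intro sum.cong refl)
    fix i assume "i \<in> {..k}"
    then have "bpweight d m (Suc i) (k - i) (Suc k) * acoef d (dxdy_poly (m - d) f) (Suc i)
        = - (bpweight d m (Suc i) (k - i) (Suc k) * (real (d - i) * real (m - i))) * acoef d f i"
      using assms by (simp add: acoef_dxdy_poly_Suc)
    also have "\<dots> = - (bpweight d m i (k - i) k * (real (d - k) * real (m - k))) * acoef d f i"
      using \<open>i \<in> {..k}\<close> assms(1,2) by (simp only: bpweight_Suc_shift atMost_iff)
    finally show "bpweight d m (Suc i) (k - i) (Suc k) * acoef d (dxdy_poly (m - d) f) (Suc i)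
          * acoef d g (k - i)
        = - (real (d - k) * real (m - k)) * (bpweight d m i (k - i) k * acoef d f i * acoef d g (k - i))"
      by simp
  qed
  finally show ?thesis
    by (simp add: boxplus_coef_def sum_distrib_left)
qed

lemma dxdy_poly_boxplus:
  assumes "d \<le> m" "degree f \<le> d"
  shows "dxdy_poly (m - d) (boxplus d m f g) = boxplus d m (dxdy_poly (m - d) f) g"
proof (rule poly_eq_by_acoef)
  show "degree (dxdy_poly (m - d) (boxplus d m f g)) \<le> d"
    by (rule order.trans[OF degree_dxdy_poly_le degree_boxplus_le])
  show "degree (boxplus d m (dxdy_poly (m - d) f) g) \<le> d"
    by (rule degree_boxplus_le)
  fix k assume "k \<le> d"
  then consider "k = 0" | k' where "k = Suc k'" "k' < d"
    by (cases k) auto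
  then show "acoef d (dxdy_poly (m - d) (boxplus d m f g)) k
           = acoef d (boxplus d m (dxdy_poly (m - d) f) g) k"
  proof cases
    case 1
    with assms show ?thesis
      by (simp add: acoef_boxplus acoef_dxdy_poly_0 degree_boxplus_le boxplus_coef_def)
  next
    case 2
    with assms show ?thesis
      by (simp add: acoef_dxdy_poly_Suc acoef_boxplus boxplus_coef_dxdy_poly_Suc)
  qed
qed

lemma funpow_dxdy_poly_boxplus:
  assumes "d \<le> m" "degree f \<le> d"
  shows "(dxdy_poly (m - d) ^^ i) (boxplus d m f g) = boxplus d m ((dxdy_poly (m - d) ^^ i) f) g"
proof (induction i)
  case (Suc i)
  have "degree ((dxdy_poly (m - d) ^^ i) f) \<le> d"
    using assms(2) by (rule order.trans[OF degree_funpow_dxdy_poly_le])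
  with Suc.IH assms(1) show ?case
    by (simp add: dxdy_poly_boxplus)
qed simp

lemma Lop_poly_boxplus:
  assumes "d \<le> m" "degree f \<le> d"
  shows "Lop_poly c N (m - d) (boxplus d m f g) = boxplus d m (Lop_poly c N (m - d) f) g"
  using assms
  by (simp add: Lop_poly_def boxplus_sum_smult_left funpow_dxdy_poly_boxplus)

theorem mainTheorem14:
  fixes d m N :: nat and c :: "nat \<Rightarrow> real" and f g :: "real poly"
  assumes "1 \<le> d" and "d \<le> m"
    and "degree f \<le> d" and "degree g \<le> d"
  shows "\<exists>f' g'. degree f' \<le> d \<and> degree g' \<le> d
           \<and> Lop c N (biv d m f) = biv d m f'
           \<and> Lop c N (biv d m g) = biv d m g'
           \<and> Lop c N (biv d m (boxplus d m f g)) = biv d m (boxplus d m f' g)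
           \<and> Lop c N (biv d m (boxplus d m f g)) = biv d m (boxplus d m f g')"
proof (intro exI conjI)
  let ?L = "Lop_poly c N (m - d)"
  show "degree (?L f) \<le> d" "degree (?L g) \<le> d"
    using assms(3,4) by (auto intro: order.trans[OF degree_Lop_poly_le])
  show "Lop c N (biv d m f) = biv d m (?L f)" "Lop c N (biv d m g) = biv d m (?L g)"
    by (rule Lop_biv)+
  show "Lop c N (biv d m (boxplus d m f g)) = biv d m (boxplus d m (?L f) g)"
    using assms(2,3) by (simp add: Lop_biv Lop_poly_boxplus)
  have "?L (boxplus d m f g) = boxplus d m (?L g) f"
    using assms(2,4) by (subst boxplus_commute) (rule Lop_poly_boxplus)
  then show "Lop c N (biv d m (boxplus d m f g)) = biv d m (boxplus d m f (?L g))"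
    by (simp add: Lop_biv boxplus_commute)
qed

end
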